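(* Let $Y=\min\{a_2 g_{sr},g_{rd}\}$ and $\bar C_{s_2,\mathrm{SC}}:=\tfrac12\mathbb E[\log_2(1+\rho Y)]$. Then \begin{align*} \bar C_{s_2,\mathrm{SC}}=\frac{1}{2\ln 2}&\sum_{\substack{k_0+\cdots+k_{m_{sr}}=N_r\\ k_0\neq N_r}}\ \sum_{\substack{q_0+\cdots+q_{m_{rd}}=N_d\\ q_0\neq N_d}}\binom{N_r}{k_0,\ldots,k_{m_{sr}}}\binom{N_d}{q_0,\ldots,q_{m_{rd}}}(-1)^{N_r+N_d-k_0-q_0}\\ &\times\Big[\prod_{\mu=0}^{m_{sr}-1}\Big(\tfrac{1}{\mu!}\Big)^{k_{\mu+1}}\Big]\Big(\tfrac{m_{sr}}{a_2\Omega_{sr}}\Big)^{\tau}\Big[\prod_{\varepsilon=0}^{m_{rd}-1}\Big(\tfrac{1}{\varepsilon!}\Big)^{q_{\varepsilon+1}}\Big]\Big(\tfrac{m_{rd}}{\Omega_{rd}}\Big)^{\upsilon}\frac{\Gamma(\tau+\upsilon+1)}{\rho^{\tau+\upsilon}}\,e^{\alpha_{k_0,q_0}/\rho}\,\Gamma\Big[-\tau-\upsilon,\tfrac{\alpha_{k_0,q_0}}{\rho}\Big], \end{align*} where $\tau=\sum_{\mu=0}^{m_{sr}-1}\mu k_{\mu+1}$, $\upsilon=\sum_{\varepsilon=0}^{m_{rd}-1}\varepsilon q_{\varepsilon+1}$ and $\alpha_{k_0,q_0}=\frac{(N_r-k_0)m_{sr}}{a_2\Omega_{sr}}+\frac{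(N_d-q_0)m_{rd}}{\Omega_{rd}}$.
   Context: Let $N_r,N_d$ be positive integers, $m_{sr},m_{sd},m_{rd}$ positive integers, and $\Omega_{sr},\Omega_{sd},\Omega_{rd}>0$. Let $\{G_{sr,i}\}_{i=1}^{N_r}$, $\{G_{sd,j}\}_{j=1}^{N_d}$, $\{G_{rd,k}\}_{k=1}^{N_d}$ be mutually independent random variables, where each $G_{sr,i}$ has the Gamma density $f(x)=\frac{(m_{sr}/\Omega_{sr})^{m_{sr}}x^{m_{sr}-1}}{\Gamma(m_{sr})}e^{-m_{sr}x/\Omega_{sr}}$, $x>0$, and analogously $G_{sd,j}$ with parameters $(m_{sd},\Omega_{sd})$ and $G_{rd,k}$ with $(m_{rd},\Omega_{rd})$. Selection combining (SC) gains: $g_{sr}=\max_i G_{sr,i}$, $g_{sd}=\max_j G_{sd,j}$, $g_{rd}=\max_k G_{rd,k}$. Let $\rho>0$ and $a_1,a_2\in(0,1)$ with $a_1+a_2=1$, $a_1>a_2$. Sums $\sum_{k_0+\cdots+k_{m}=N,\,k_0\neq N}$ run over tuples of nonnegative integers summing to $N$ with $k_0\ne N$; $\binom{N}{k_0,\ldots,k_m}$ is the multinomial coefficient. $\Gamma[s,z]=\int_z^\infty t^{s-1}e^{-t}\,dt$ ($z>0$) is the upper incomplete Gamma function. *)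

theory Defs
  imports "HOL-Probability.Probability"
begin

definition gamma_pdf :: "nat \<Rightarrow> real \<Rightarrow> real \<Rightarrow> real" where
  "gamma_pdf m \<Omega> x =
     (if x > 0 then (real m / \<Omega>) ^ m * x ^ (m - 1) / Gamma (real m) * exp (- real m * x / \<Omega>)
      else 0)"

definition upper_Gamma :: "real \<Rightarrow> real \<Rightarrow> real" where
  "upper_Gamma s z = (\<integral>t\<in>{z<..}. t powr (s - 1) * exp (- t) \<partial>lborel)"

definition comp_tuples :: "nat \<Rightarrow> nat \<Rightarrow> (nat \<Rightarrow> nat) set" where
  "comp_tuples N m = {k. (\<forall>i>m. k i = 0) \<and> (\<Sum>i\<le>m. k i) = N \<and> k 0 \<noteq> N}"

definition multinom :: "nat \<Rightarrow> nat \<Rightarrow> (nat \<Rightarrow> nat) \<Rightarrow> real" where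
  "multinom N m k = fact N / (\<Prod>i\<le>m. fact (k i))"

text \<open>Index of the links' branches: S-R branch i, S-D branch j, R-D branch k.\<close>
datatype branch = SR nat | SD nat | RD nat

end

theory Submission
  imports Defs
begin

text \<open>
  A Gamma variable of integer shape m is Erlang, so its CDF is
  F(x) = 1 - sum_{n<m} (l x)^n e^(-l x) / n!.  By independence,
  P(Y > t) = (1 - F_sr(t/a2)^Nr) (1 - F_rd(t)^Nd), and the multinomial theorem turns
  this into a finite sum of terms c t^n e^(-alpha t).  For Y >= 0 Tonelli gives
  E ln(1 + rho Y) = int_0^oo rho/(1 + rho t) P(Y > t) dt, so it remains to evaluate
  int_0^oo rho/(1 + rho t) t^n e^(-alpha t) dt.  Integration by parts yields recurrences
  reducing it to int_0^oo e^(-alpha y) / (1 + rho y)^(n+1) dy, which the substitution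
  t = (alpha/rho)(1 + rho y) identifies with e^(-alpha/rho) Gamma[-n, alpha/rho] up to
  explicit factors.
\<close>

lemma
  fixes \<alpha> :: real
  assumes "\<alpha> > 0"
  shows integrable_power_exp: "integrable lborel (\<lambda>y. indicator {0<..} y * (y ^ n * exp (- \<alpha> * y)))"
    and integral_power_exp: "(\<integral>y. indicator {0<..} y * (y ^ n * exp (- \<alpha> * y)) \<partial>lborel) = fact n / \<alpha> ^ (n + 1)"
proof -
  have "(\<integral>\<^sup>+ x. ennreal (erlang_density n \<alpha> x) \<partial>lborel) = 1"
    using nn_integral_erlang_ith_moment[OF assms, of n 0] by simp
  then have integrable: "integrable lborel (erlang_density n \<alpha>)"
    and integral: "integral\<^sup>L lborel (erlang_density n \<alpha>) = 1"
    using assms integral_eq_nn_integral[of "erlang_density n \<alpha>" lborel]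
    by (auto intro!: integrableI_nonneg)
  have ae: "AE y in lborel. indicator {0<..} y * (y ^ n * exp (- \<alpha> * y)) = fact n / \<alpha> ^ (n + 1) * erlang_density n \<alpha> y"
    using AE_lborel_singleton[of 0]
    by eventually_elim (use assms in \<open>auto simp: erlang_density_def indicator_def\<close>)
  show "integrable lborel (\<lambda>y. indicator {0<..} y * (y ^ n * exp (- \<alpha> * y)))"
    by (subst integrable_cong_AE[OF _ _ ae]) (use integrable in auto)
  show "(\<integral>y. indicator {0<..} y * (y ^ n * exp (- \<alpha> * y)) \<partial>lborel) = fact n / \<alpha> ^ (n + 1)"
    by (subst integral_cong_AE[OF _ _ ae]) (use integral in auto)
qed

definition exp_rational_integral :: "real \<Rightarrow> real \<Rightarrow> nat \<Rightarrow> real" where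
  "exp_rational_integral \<rho> \<alpha> n = (\<integral>y. indicator {0<..} y * (exp (- \<alpha> * y) / (1 + \<rho> * y) ^ (n + 1)) \<partial>lborel)"

text \<open>The weight \<open>\<rho> / (1 + \<rho> * y)\<close> is the derivative of \<open>ln (1 + \<rho> * y)\<close>.\<close>
definition log_deriv_moment :: "real \<Rightarrow> real \<Rightarrow> nat \<Rightarrow> real" where
  "log_deriv_moment \<rho> \<alpha> n = (\<integral>y. indicator {0<..} y * (\<rho> / (1 + \<rho> * y) * (y ^ n * exp (- \<alpha> * y))) \<partial>lborel)"

lemma integrable_exp_rational:
  fixes \<rho> \<alpha> :: real
  assumes "\<rho> > 0" "\<alpha> > 0"
  shows "integrable lborel (\<lambda>y. indicator {0<..} y * (exp (- \<alpha> * y) / (1 + \<rho> * y) ^ (n + 1)))"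
proof (rule Bochner_Integration.integrable_bound[OF integrable_power_exp[OF assms(2), of 0]])
  have "exp (- \<alpha> * y) / (1 + \<rho> * y) ^ (n + 1) \<le> exp (- \<alpha> * y)" if "y > 0" for y
    using that assms by (simp add: divide_le_eq one_le_power del: power_Suc)
  then show "AE y in lborel. norm (indicator {0<..} y * (exp (- \<alpha> * y) / (1 + \<rho> * y) ^ (n + 1)))
        \<le> norm (indicator {0<..} y * (y ^ 0 * exp (- \<alpha> * y)))"
    using assms by (intro AE_I2) (auto simp: indicator_def simp del: power_Suc)
qed measurable

lemma integrable_log_deriv_moment:
  fixes \<rho> \<alpha> :: real
  assumes "\<rho> > 0" "\<alpha> > 0"
  shows "integrable lborel (\<lambda>y. indicator {0<..} y * (\<rho> / (1 + \<rho> * y) * (y ^ n * exp (- \<alpha> * y))))"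
proof (rule Bochner_Integration.integrable_bound[OF integrable_mult_right[OF integrable_power_exp[OF assms(2), of n], of \<rho>]])
  have "\<rho> / (1 + \<rho> * y) * (y ^ n * exp (- \<alpha> * y)) \<le> \<rho> * (y ^ n * exp (- \<alpha> * y))" if "y > 0" for y
    using that assms by (intro mult_right_mono) (auto simp: divide_le_eq)
  then show "AE y in lborel. norm (indicator {0<..} y * (\<rho> / (1 + \<rho> * y) * (y ^ n * exp (- \<alpha> * y))))
        \<le> norm (\<rho> * (indicator {0<..} y * (y ^ n * exp (- \<alpha> * y))))"
    using assms by (intro AE_I2) (auto simp: indicator_def)
qed measurable

lemma exp_over_power_has_derivative:
  fixes \<alpha> \<rho> x :: real
  assumes "1 + \<rho> * x \<noteq> 0"
  shows "((\<lambda>y. exp (- \<alpha> * y) / (1 + \<rho> * y) ^ (n + 1)) has_real_derivative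
    - (\<alpha> * (exp (- \<alpha> * x) / (1 + \<rho> * x) ^ (n + 1))
       + real (n + 1) * \<rho> * (exp (- \<alpha> * x) / (1 + \<rho> * x) ^ (n + 2)))) (at x)"
proof -
  have num: "((\<lambda>y. exp (- \<alpha> * y)) has_real_derivative exp (- \<alpha> * x) * - \<alpha>) (at x)"
    by (rule derivative_eq_intros refl)+ simp
  have den: "((\<lambda>y. (1 + \<rho> * y) ^ (n + 1)) has_real_derivative real (n + 1) * (1 + \<rho> * x) ^ n * \<rho>) (at x)"
    by (rule derivative_eq_intros refl)+ (simp add: algebra_simps)
  have quotient_rule: "(e * - \<alpha> * u ^ (n + 1) - e * (real (n + 1) * u ^ n * \<rho>)) / (u ^ (n + 1) * u ^ (n + 1))
      = - (\<alpha> * (e / u ^ (n + 1)) + real (n + 1) * \<rho> * (e / u ^ (n + 2)))" if "u \<noteq> 0" for u e :: real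
    using that by (simp add: field_simps)
  show ?thesis
    using DERIV_divide[OF num den power_not_zero[OF assms]] by (simp only: quotient_rule[OF assms])
qed

lemma exp_over_power_tendsto_0:
  fixes \<alpha> \<rho> :: real
  assumes "\<alpha> > 0" "\<rho> > 0"
  shows "((\<lambda>y. exp (- \<alpha> * y) / (1 + \<rho> * y) ^ (n + 1)) \<longlongrightarrow> 0) at_top"
proof -
  have "((\<lambda>y. exp (- \<alpha> * y)) \<longlongrightarrow> 0) at_top"
    using assms by (auto intro!: exp_at_bot[THEN filterlim_compose] filterlim_tendsto_pos_mult_at_top
        filterlim_ident simp: filterlim_uminus_at_bot)
  moreover have "filterlim (\<lambda>y. (1 + \<rho> * y) ^ (n + 1)) at_top at_top"
    using assms by (intro filterlim_pow_at_top filterlim_tendsto_add_at_top[OF tendsto_const]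
        filterlim_tendsto_pos_mult_at_top[OF tendsto_const _ filterlim_ident]) auto
  ultimately show ?thesis
    using tendsto_mult[OF _ tendsto_inverse_0_at_top] by (fastforce simp: divide_inverse)
qed

lemma exp_rational_integral_recurrence:
  fixes \<rho> \<alpha> :: real
  assumes \<rho>: "\<rho> > 0" and \<alpha>: "\<alpha> > 0"
  shows "real (n + 1) * \<rho> * exp_rational_integral \<rho> \<alpha> (n + 1) + \<alpha> * exp_rational_integral \<rho> \<alpha> n = 1"
proof -
  let ?F = "\<lambda>y. exp (- \<alpha> * y) / (1 + \<rho> * y) ^ (n + 1)"
  let ?f = "\<lambda>y. \<alpha> * (exp (- \<alpha> * y) / (1 + \<rho> * y) ^ (n + 1))
    + real (n + 1) * \<rho> * (exp (- \<alpha> * y) / (1 + \<rho> * y) ^ (n + 2))"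
  have "(LBINT y=ereal 0..\<infinity>. ?f y) = 0 - (- 1)"
  proof (rule interval_integral_FTC_nonneg[where F = "\<lambda>y. - ?F y"])
    fix x assume "ereal 0 < ereal x"
    then have "1 + \<rho> * x > 0" using \<rho> by (simp add: add_pos_pos)
    then show "((\<lambda>y. - ?F y) has_real_derivative ?f x) (at x)" "isCont ?f x"
      using DERIV_minus[OF exp_over_power_has_derivative[of \<rho> x \<alpha> n]]
      by (auto intro!: continuous_intros simp: add.commute)
  next
    show "AE x in lborel. ereal 0 < ereal x \<longrightarrow> ereal x < \<infinity> \<longrightarrow> 0 \<le> ?f x"
      using \<rho> \<alpha> by (intro AE_I2) (auto intro!: add_nonneg_nonneg mult_nonneg_nonneg divide_nonneg_pos)
    have "continuous (at_right 0) (\<lambda>y. - ?F y)" using \<rho> by (intro continuous_intros) auto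
    then show "(((\<lambda>y. - ?F y) \<circ> real_of_ereal) \<longlongrightarrow> - 1) (at_right (ereal 0))"
      unfolding ereal_tendsto_simps continuous_within by simp
    show "(((\<lambda>y. - ?F y) \<circ> real_of_ereal) \<longlongrightarrow> 0) (at_left \<infinity>)"
      unfolding ereal_tendsto_simps using tendsto_minus[OF exp_over_power_tendsto_0[OF \<alpha> \<rho>]] by simp
  qed simp
  also have "(LBINT y=ereal 0..\<infinity>. ?f y)
      = (\<integral>y. \<alpha> * (indicator {0<..} y * ?F y)
          + real (n + 1) * \<rho> * (indicator {0<..} y * (exp (- \<alpha> * y) / (1 + \<rho> * y) ^ (n + 1 + 1))) \<partial>lborel)"
    by (auto simp: interval_integral_to_infinity_eq set_lebesgue_integral_def algebra_simps intro!: Bochner_Integration.integral_cong)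
  also have "\<dots> = \<alpha> * exp_rational_integral \<rho> \<alpha> n + real (n + 1) * \<rho> * exp_rational_integral \<rho> \<alpha> (n + 1)"
    unfolding exp_rational_integral_def
    by (simp only: Bochner_Integration.integral_add integral_mult_right_zero
        integrable_mult_right integrable_exp_rational[OF \<rho> \<alpha>])
  finally show ?thesis by simp
qed

lemma log_deriv_moment_recurrence:
  fixes \<rho> \<alpha> :: real
  assumes \<rho>: "\<rho> > 0" and \<alpha>: "\<alpha> > 0"
  shows "log_deriv_moment \<rho> \<alpha> (n + 1) + log_deriv_moment \<rho> \<alpha> n / \<rho> = fact n / \<alpha> ^ (n + 1)"
proof -
  have pointwise: "indicator {0<..} y * (\<rho> / (1 + \<rho> * y) * (y ^ (n + 1) * exp (- \<alpha> * y)))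
      + inverse \<rho> * (indicator {0<..} y * (\<rho> / (1 + \<rho> * y) * (y ^ n * exp (- \<alpha> * y))))
    = indicator {0<..} y * (y ^ n * exp (- \<alpha> * y))" for y :: real
  proof (cases "y > 0")
    case True
    have "1 + \<rho> * y > 0" using True \<rho> by (simp add: add_pos_pos)
    moreover have "\<rho> / u * (y ^ (n + 1) * e) + inverse \<rho> * (\<rho> / u * (y ^ n * e)) = (1 + \<rho> * y) / u * (y ^ n * e)"
      if "u \<noteq> 0" for u e :: real
      using \<rho> that by (simp add: field_simps)
    ultimately show ?thesis using True by simp
  qed simp
  have "log_deriv_moment \<rho> \<alpha> (n + 1) + log_deriv_moment \<rho> \<alpha> n / \<rho>
      = (\<integral>y. indicator {0<..} y * (\<rho> / (1 + \<rho> * y) * (y ^ (n + 1) * exp (- \<alpha> * y)))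
          + inverse \<rho> * (indicator {0<..} y * (\<rho> / (1 + \<rho> * y) * (y ^ n * exp (- \<alpha> * y)))) \<partial>lborel)"
    unfolding log_deriv_moment_def
    by (simp only: Bochner_Integration.integral_add integral_mult_right_zero integrable_mult_right
        integrable_log_deriv_moment[OF \<rho> \<alpha>]) (simp add: divide_inverse mult.commute)
  also have "\<dots> = fact n / \<alpha> ^ (n + 1)"
    by (simp only: pointwise integral_power_exp[OF \<alpha>])
  finally show ?thesis .
qed

lemma log_deriv_moment_eq_exp_rational_integral:
  fixes \<rho> \<alpha> :: real
  assumes \<rho>: "\<rho> > 0" and \<alpha>: "\<alpha> > 0"
  shows "log_deriv_moment \<rho> \<alpha> n = fact n * \<rho> / \<alpha> ^ n * exp_rational_integral \<rho> \<alpha> n"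
proof (induction n)
  case 0
  show ?case unfolding log_deriv_moment_def exp_rational_integral_def
    by (simp flip: integral_mult_right_zero) (intro Bochner_Integration.integral_cong; simp add: field_simps)
next
  case (Suc n)
  have "log_deriv_moment \<rho> \<alpha> (n + 1) = fact n / \<alpha> ^ (n + 1) - fact n / \<alpha> ^ n * exp_rational_integral \<rho> \<alpha> n"
    using log_deriv_moment_recurrence[OF \<rho> \<alpha>, of n] Suc \<rho> by simp
  also have "\<dots> = fact n / \<alpha> ^ (n + 1) * (1 - \<alpha> * exp_rational_integral \<rho> \<alpha> n)"
    using \<alpha> by (simp add: field_simps)
  also have "1 - \<alpha> * exp_rational_integral \<rho> \<alpha> n = real (n + 1) * \<rho> * exp_rational_integral \<rho> \<alpha> (n + 1)"
    using exp_rational_integral_recurrence[OF \<rho> \<alpha>, of n] by simp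
  finally show ?case using \<alpha> by (simp add: field_simps)
qed

lemma upper_Gamma_neg_nat_eq_exp_rational_integral:
  fixes \<rho> \<alpha> :: real
  assumes \<rho>: "\<rho> > 0" and \<alpha>: "\<alpha> > 0"
  shows "upper_Gamma (- real n) (\<alpha> / \<rho>) = \<alpha> * (\<rho> / \<alpha>) ^ (n + 1) * exp (- (\<alpha> / \<rho>)) * exp_rational_integral \<rho> \<alpha> n"
proof -
  define z where "z = \<alpha> / \<rho>"
  have pointwise: "indicator {z<..} (z + \<alpha> * y) * ((z + \<alpha> * y) powr (- real n - 1) * exp (- (z + \<alpha> * y)))
      = (\<rho> / \<alpha>) ^ (n + 1) * exp (- z) * (indicator {0<..} y * (exp (- \<alpha> * y) / (1 + \<rho> * y) ^ (n + 1)))"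
    for y :: real
  proof (cases "y > 0")
    case True
    have shift: "z + \<alpha> * y = (\<alpha> / \<rho>) * (1 + \<rho> * y)" using \<rho> by (simp add: z_def field_simps)
    have "z + \<alpha> * y > 0" using True \<rho> \<alpha> by (simp add: z_def add_pos_pos)
    moreover have "- real n - 1 = - real (n + 1)" by simp
    ultimately have "(z + \<alpha> * y) powr (- real n - 1) = inverse ((z + \<alpha> * y) ^ (n + 1))"
      by (simp only: powr_minus powr_realpow)
    also have "\<dots> = (\<rho> / \<alpha>) ^ (n + 1) / (1 + \<rho> * y) ^ (n + 1)"
      unfolding shift
      by (simp add: power_mult_distrib inverse_mult_distrib inverse_divide divide_inverse flip: power_inverse)
    finally have "(z + \<alpha> * y) powr (- real n - 1) = (\<rho> / \<alpha>) ^ (n + 1) / (1 + \<rho> * y) ^ (n + 1)" .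
    then show ?thesis using True \<alpha> by (simp add: exp_add[symmetric] algebra_simps)
  next
    case False
    then have "\<not> z < z + \<alpha> * y" using \<alpha> by (simp add: mult_le_0_iff not_less)
    then show ?thesis using False by simp
  qed
  have "upper_Gamma (- real n) z = (\<integral>t. indicator {z<..} t * (t powr (- real n - 1) * exp (- t)) \<partial>lborel)"
    by (simp add: upper_Gamma_def set_lebesgue_integral_def)
  also have "\<dots> = \<alpha> * (\<integral>y. indicator {z<..} (z + \<alpha> * y) * ((z + \<alpha> * y) powr (- real n - 1) * exp (- (z + \<alpha> * y))) \<partial>lborel)"
    using lborel_integral_real_affine[of \<alpha> "\<lambda>t. indicator {z<..} t * (t powr (- real n - 1) * exp (- t))" z] \<alpha>
    by simp
  also have "\<dots> = \<alpha> * ((\<rho> / \<alpha>) ^ (n + 1) * exp (- z) * exp_rational_integral \<rho> \<alpha> n)"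
    by (simp only: pointwise integral_mult_right_zero exp_rational_integral_def)
  finally show ?thesis unfolding z_def by simp
qed

lemma log_deriv_moment_upper_Gamma:
  fixes \<rho> \<alpha> :: real
  assumes \<rho>: "\<rho> > 0" and \<alpha>: "\<alpha> > 0"
  shows "log_deriv_moment \<rho> \<alpha> n = Gamma (real n + 1) / \<rho> ^ n * exp (\<alpha> / \<rho>) * upper_Gamma (- real n) (\<alpha> / \<rho>)"
proof -
  have "Gamma (real n + 1) = fact n"
    using Gamma_fact[of n] by (simp add: add.commute)
  then show ?thesis using \<rho> \<alpha> by (simp add: log_deriv_moment_eq_exp_rational_integral upper_Gamma_neg_nat_eq_exp_rational_integral
      field_simps exp_minus power_add)
qed

definition sum_tuples :: "nat \<Rightarrow> nat \<Rightarrow> (nat \<Rightarrow> nat) set" where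
  "sum_tuples N m = {k. (\<forall>i>m. k i = 0) \<and> (\<Sum>i\<le>m. k i) = N}"

lemma finite_sum_tuples: "finite (sum_tuples N m)"
proof -
  have "sum_tuples N m \<subseteq> (\<lambda>f i. if i \<le> m then f i else 0) ` (PiE {..m} (\<lambda>_. {..N}))"
  proof
    fix k assume k: "k \<in> sum_tuples N m"
    have "k i \<le> N" if "i \<le> m" for i
      using k member_le_sum[of i "{..m}" k] that by (simp add: sum_tuples_def)
    moreover have "k = (\<lambda>i. if i \<le> m then restrict k {..m} i else 0)"
      using k by (auto simp: sum_tuples_def fun_eq_iff not_le)
    ultimately show "k \<in> (\<lambda>f i. if i \<le> m then f i else 0) ` (PiE {..m} (\<lambda>_. {..N}))"
      by (intro image_eqI[where x = "restrict k {..m}"]) auto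
  qed
  then show ?thesis by (rule finite_subset) (intro finite_imageI finite_PiE; simp)
qed

lemma sum_tuples_0: "sum_tuples N 0 = {(\<lambda>i. if i = 0 then N else 0)}"
  by (auto simp: sum_tuples_def fun_eq_iff)

lemma bij_betw_sum_tuples_Suc:
  "bij_betw (\<lambda>(j, k). k(Suc m := j)) (SIGMA j:{..N}. sum_tuples (N - j) m) (sum_tuples N (Suc m))"
proof (rule bij_betw_byWitness[where f' = "\<lambda>k. (k (Suc m), k(Suc m := 0))"])
  have sum_upd: "(\<Sum>i\<le>m. (k(Suc m := j)) i) = (\<Sum>i\<le>m. k i)" for k :: "nat \<Rightarrow> nat" and j
    by (intro sum.cong) auto
  show "\<forall>p\<in>SIGMA j:{..N}. sum_tuples (N - j) m. (\<lambda>k. (k (Suc m), k(Suc m := 0))) ((\<lambda>(j, k). k(Suc m := j)) p) = p"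
    by (auto simp: sum_tuples_def fun_eq_iff)
  show "\<forall>k\<in>sum_tuples N (Suc m). (\<lambda>(j, k). k(Suc m := j)) (k (Suc m), k(Suc m := 0)) = k"
    by auto
  show "(\<lambda>(j, k). k(Suc m := j)) ` (SIGMA j:{..N}. sum_tuples (N - j) m) \<subseteq> sum_tuples N (Suc m)"
    using sum_upd by (auto simp: sum_tuples_def)
  show "(\<lambda>k. (k (Suc m), k(Suc m := 0))) ` sum_tuples N (Suc m) \<subseteq> (SIGMA j:{..N}. sum_tuples (N - j) m)"
    using sum_upd by (auto simp: sum_tuples_def)
qed

lemma multinom_fun_upd_Suc:
  assumes "j \<le> N"
  shows "multinom N (Suc m) (k(Suc m := j)) = real (N choose j) * multinom (N - j) m k"
proof -
  have "(\<Prod>i\<le>Suc m. fact ((k(Suc m := j)) i) :: real) = (\<Prod>i\<le>m. fact (k i)) * fact j"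
    by (simp add: prod.atMost_Suc)
  moreover have "(\<Prod>i\<le>m. fact (k i) :: real) > 0" by (intro prod_pos) auto
  ultimately show ?thesis
    unfolding multinom_def binomial_fact[OF assms] using assms by (simp add: field_simps)
qed

theorem multinomial_theorem:
  fixes x :: "nat \<Rightarrow> real"
  shows "(\<Sum>i\<le>m. x i) ^ N = (\<Sum>k\<in>sum_tuples N m. multinom N m k * (\<Prod>i\<le>m. x i ^ k i))"
proof (induction m arbitrary: N)
  case 0
  show ?case by (simp add: sum_tuples_0 multinom_def)
next
  case (Suc m)
  have summand: "real (N choose j) * multinom (N - j) m k * ((\<Prod>i\<le>m. x i ^ k i) * x (Suc m) ^ j)
      = multinom N (Suc m) (k(Suc m := j)) * (\<Prod>i\<le>Suc m. x i ^ (k(Suc m := j)) i)" if "j \<le> N" for j k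
  proof -
    have "(\<Prod>i\<le>m. x i ^ (k(Suc m := j)) i) = (\<Prod>i\<le>m. x i ^ k i)" by (intro prod.cong) auto
    then show ?thesis using that by (simp add: multinom_fun_upd_Suc)
  qed
  have "(\<Sum>i\<le>Suc m. x i) ^ N = (x (Suc m) + (\<Sum>i\<le>m. x i)) ^ N" by (simp add: add.commute)
  also have "\<dots> = (\<Sum>j\<le>N. real (N choose j) * x (Suc m) ^ j * (\<Sum>i\<le>m. x i) ^ (N - j))"
    by (rule binomial_ring)
  also have "\<dots> = (\<Sum>j\<le>N. \<Sum>k\<in>sum_tuples (N - j) m.
      real (N choose j) * multinom (N - j) m k * ((\<Prod>i\<le>m. x i ^ k i) * x (Suc m) ^ j))"
    unfolding Suc.IH by (simp add: sum_distrib_left mult_ac)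
  also have "\<dots> = (\<Sum>(j, k)\<in>(SIGMA j:{..N}. sum_tuples (N - j) m).
      real (N choose j) * multinom (N - j) m k * ((\<Prod>i\<le>m. x i ^ k i) * x (Suc m) ^ j))"
    by (simp add: sum.Sigma finite_sum_tuples)
  also have "\<dots> = (\<Sum>(j, k)\<in>(SIGMA j:{..N}. sum_tuples (N - j) m).
      multinom N (Suc m) (k(Suc m := j)) * (\<Prod>i\<le>Suc m. x i ^ (k(Suc m := j)) i))"
    using summand by (intro sum.cong refl) auto
  also have "\<dots> = (\<Sum>k\<in>sum_tuples N (Suc m). multinom N (Suc m) k * (\<Prod>i\<le>Suc m. x i ^ k i))"
    by (subst sum.reindex_bij_betw[OF bij_betw_sum_tuples_Suc, symmetric]) (simp add: case_prod_beta)
  finally show ?case .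
qed

lemma sum_tuples_eq_insert_comp_tuples:
  "sum_tuples N m = insert (\<lambda>i. if i = 0 then N else 0) (comp_tuples N m)"
proof (intro set_eqI iffI)
  fix k assume k: "k \<in> sum_tuples N m"
  show "k \<in> insert (\<lambda>i. if i = 0 then N else 0) (comp_tuples N m)"
  proof (cases "k 0 = N")
    case True
    have "(\<Sum>i\<le>m. k i) = k 0 + (\<Sum>i\<in>{1..m}. k i)"
      by (simp add: sum.atMost_shift atMost_atLeast0 sum.atLeast_Suc_atMost)
    then have "\<forall>i\<in>{1..m}. k i = 0" using k True by (simp add: sum_tuples_def)
    then show ?thesis using k True by (auto simp: sum_tuples_def fun_eq_iff)
  next
    case False
    then show ?thesis using k by (simp add: sum_tuples_def comp_tuples_def)
  qed
qed (auto simp: sum_tuples_def comp_tuples_def)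

lemma finite_comp_tuples: "finite (comp_tuples N m)"
  using finite_sum_tuples[of N m] by (simp add: sum_tuples_eq_insert_comp_tuples)

lemma comp_tuples_zero_less: "k \<in> comp_tuples N m \<Longrightarrow> k 0 < N"
  using member_le_sum[of 0 "{..m}" k] by (force simp: comp_tuples_def)

corollary multinomial_theorem_comp_tuples:
  fixes x :: "nat \<Rightarrow> real"
  shows "(\<Sum>i\<le>m. x i) ^ N = x 0 ^ N + (\<Sum>k\<in>comp_tuples N m. multinom N m k * (\<Prod>i\<le>m. x i ^ k i))"
proof -
  have "(\<Prod>i\<le>m. x i ^ (if i = 0 then N else 0)) = (\<Prod>i\<in>{0}. x i ^ N)"
    and "(\<Prod>i\<le>m. fact (if i = 0 then N else 0) :: real) = (\<Prod>i\<in>{0::nat}. fact N)"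
    by (rule prod.mono_neutral_cong_right; auto)+
  moreover have "(\<lambda>i. if i = 0 then N else 0) \<notin> comp_tuples N m"
    by (simp add: comp_tuples_def)
  ultimately show ?thesis
    unfolding multinomial_theorem sum_tuples_eq_insert_comp_tuples
    by (simp add: finite_comp_tuples multinom_def)
qed

definition tuple_degree :: "nat \<Rightarrow> (nat \<Rightarrow> nat) \<Rightarrow> nat" where
  "tuple_degree m k = (\<Sum>\<mu><m. \<mu> * k (\<mu> + 1))"

definition cdf_power_coeff :: "real \<Rightarrow> nat \<Rightarrow> nat \<Rightarrow> (nat \<Rightarrow> nat) \<Rightarrow> real" where
  "cdf_power_coeff l N m k =
     multinom N m k * (-1) ^ (N - k 0) * (\<Prod>\<mu><m. (1 / fact \<mu>) ^ k (\<mu> + 1)) * l ^ tuple_degree m k"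

lemma one_minus_erlang_CDF_power:
  fixes l y :: real
  assumes "m > 0" "0 \<le> y"
  shows "1 - erlang_CDF (m - 1) l y ^ N
    = - (\<Sum>k\<in>comp_tuples N m. cdf_power_coeff l N m k * (y ^ tuple_degree m k * exp (- (real (N - k 0) * l) * y)))"
proof -
  define x where "x = (\<lambda>i. if i = 0 then 1 else - ((l * y) ^ (i - 1) * exp (- l * y) / fact (i - 1)))"
  have atMost_shift: "(\<Sum>i\<le>m. f i) = f 0 + (\<Sum>\<mu><m. f (\<mu> + 1))" for f :: "nat \<Rightarrow> 'b::comm_monoid_add"
    using assms by (cases m) (simp_all del: sum.atMost_Suc add: sum.atMost_Suc_shift lessThan_Suc_atMost)
  have prod_shift: "(\<Prod>i\<le>m. f i) = f 0 * (\<Prod>\<mu><m. f (\<mu> + 1))" for f :: "nat \<Rightarrow> real"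
    using assms by (cases m) (simp_all del: prod.atMost_Suc add: prod.atMost_Suc_shift lessThan_Suc_atMost)
  have summand: "multinom N m k * (\<Prod>i\<le>m. x i ^ k i)
      = cdf_power_coeff l N m k * (y ^ tuple_degree m k * exp (- (real (N - k 0) * l) * y))"
    if "k \<in> comp_tuples N m" for k
  proof -
    have tail_count: "(\<Sum>\<mu><m. k (\<mu> + 1)) = N - k 0"
      using that atMost_shift[of k] by (auto simp: comp_tuples_def)
    have "x (\<mu> + 1) ^ c = (-1) ^ c * (1 / fact \<mu>) ^ c * l ^ (\<mu> * c) * (y ^ (\<mu> * c) * exp (- l * y) ^ c)" for \<mu> c
      by (simp add: x_def power_minus' power_mult_distrib power_mult divide_inverse power_inverse mult_ac)
    then have "(\<Prod>i\<le>m. x i ^ k i) = (-1) ^ (\<Sum>\<mu><m. k (\<mu> + 1)) * (\<Prod>\<mu><m. (1 / fact \<mu>) ^ k (\<mu> + 1))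
        * l ^ tuple_degree m k * (y ^ tuple_degree m k * exp (- l * y) ^ (\<Sum>\<mu><m. k (\<mu> + 1)))"
      by (simp add: prod_shift x_def prod.distrib power_sum tuple_degree_def)
    also have "exp (- l * y) ^ (\<Sum>\<mu><m. k (\<mu> + 1)) = exp (- (real (N - k 0) * l) * y)"
      unfolding tail_count exp_of_nat_mult[symmetric] by (simp add: algebra_simps)
    finally show ?thesis unfolding cdf_power_coeff_def tail_count by (simp add: mult_ac)
  qed
  have "{..m - 1} = {..<m}" using assms(1) by auto
  then have "(\<Sum>i\<le>m. x i) = erlang_CDF (m - 1) l y"
    using assms(2) by (simp add: atMost_shift x_def sum_negf erlang_CDF_def)
  then show ?thesis
    using multinomial_theorem_comp_tuples[of x m N] summand by (simp add: x_def)
qed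

lemma product_of_one_minus_erlang_CDF_powers:
  fixes l1 l2 y :: real
  assumes "m1 > 0" "m2 > 0" "0 \<le> y"
  shows "(1 - erlang_CDF (m1 - 1) l1 y ^ N1) * (1 - erlang_CDF (m2 - 1) l2 y ^ N2)
    = (\<Sum>(k, q)\<in>comp_tuples N1 m1 \<times> comp_tuples N2 m2.
         cdf_power_coeff l1 N1 m1 k * cdf_power_coeff l2 N2 m2 q
         * (y ^ (tuple_degree m1 k + tuple_degree m2 q) * exp (- (real (N1 - k 0) * l1 + real (N2 - q 0) * l2) * y)))"
  unfolding one_minus_erlang_CDF_power[OF assms(1,3)] one_minus_erlang_CDF_power[OF assms(2,3)]
  by (simp add: sum_product sum.cartesian_product power_add mult_exp_exp algebra_simps)

lemma cdf_power_coeff_mult: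
  assumes "k \<in> comp_tuples N1 m1" "q \<in> comp_tuples N2 m2"
  shows "cdf_power_coeff l1 N1 m1 k * cdf_power_coeff l2 N2 m2 q
    = multinom N1 m1 k * multinom N2 m2 q * (-1) ^ (N1 + N2 - k 0 - q 0)
      * (\<Prod>\<mu><m1. (1 / fact \<mu>) ^ k (\<mu> + 1)) * l1 ^ tuple_degree m1 k
      * (\<Prod>\<mu><m2. (1 / fact \<mu>) ^ q (\<mu> + 1)) * l2 ^ tuple_degree m2 q"
proof -
  have "N1 + N2 - k 0 - q 0 = (N1 - k 0) + (N2 - q 0)"
    using comp_tuples_zero_less[OF assms(1)] comp_tuples_zero_less[OF assms(2)] by simp
  then show ?thesis by (simp add: cdf_power_coeff_def power_add mult_ac)
qed

lemma (in prob_space) prob_exceeds_in_both: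
  fixes X :: "'i \<Rightarrow> 'a \<Rightarrow> real"
  assumes indep: "indep_vars (\<lambda>_. borel) X I"
    and "A \<subseteq> I" "B \<subseteq> I" "A \<inter> B = {}" "finite A" "finite B" "A \<noteq> {}" "B \<noteq> {}"
  shows "prob {\<omega>\<in>space M. (\<exists>i\<in>A. c i < X i \<omega>) \<and> (\<exists>j\<in>B. c j < X j \<omega>)}
    = (1 - (\<Prod>i\<in>A. prob {\<omega>\<in>space M. X i \<omega> \<le> c i})) * (1 - (\<Prod>j\<in>B. prob {\<omega>\<in>space M. X j \<omega> \<le> c j}))"
proof -
  define below where "below J = (\<Inter>i\<in>J. {\<omega>\<in>space M. X i \<omega> \<le> c i})" for J
  have rv_measurable: "X i \<in> borel_measurable M" if "i \<in> I" for i
    using indep that by (auto simp: indep_vars_def2)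
  have prob_below: "prob (below J) = (\<Prod>i\<in>J. prob {\<omega>\<in>space M. X i \<omega> \<le> c i})"
    if "J \<subseteq> I" "J \<noteq> {}" "finite J" for J
  proof -
    have preimage: "{\<omega>\<in>space M. X i \<omega> \<le> c i} = X i -` {..c i} \<inter> space M" for i by auto
    from indep have "indep_sets (\<lambda>i. {X i -` A \<inter> space M | A. A \<in> sets borel}) I"
      by (simp add: indep_vars_def2)
    then show ?thesis
      unfolding below_def preimage by (rule indep_setsD[OF _ that]) (auto intro!: exI[where x = "{..c i}" for i])
  qed
  have below_event: "below J \<in> events" if "J \<subseteq> I" "J \<noteq> {}" "finite J" for J
    unfolding below_def using that rv_measurable by (intro sets.finite_INT) auto
  have "{\<omega>\<in>space M. (\<exists>i\<in>A. c i < X i \<omega>) \<and> (\<exists>j\<in>B. c j < X j \<omega>)} = space M - (below A \<union> below B)"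
    by (auto simp: below_def not_le dest: leD)
  moreover have "below A \<inter> below B = below (A \<union> B)"
    by (auto simp: below_def)
  moreover have "prob (below (A \<union> B)) = prob (below A) * prob (below B)"
    using assms by (simp add: prob_below prod.union_disjoint)
  ultimately show ?thesis
    using assms below_event[of A] below_event[of B]
    by (simp add: prob_compl measure_Un3 fmeasurable_eq_sets prob_below algebra_simps)
qed

lemma distributed_gamma_pdf_erlang:
  assumes "distributed M lborel X (\<lambda>x. ennreal (gamma_pdf m \<Omega> x))" "m > 0"
  shows "distributed M lborel X (erlang_density (m - 1) (real m / \<Omega>))"
proof -
  have "Gamma (real m) = fact (m - 1)"
    using Gamma_fact[of "m - 1"] assms(2) by (simp add: of_nat_diff)
  moreover have "Suc (m - 1) = m" using assms(2) by simp
  ultimately have ae: "AE x in lborel. ennreal (gamma_pdf m \<Omega> x) = ennreal (erlang_density (m - 1) (real m / \<Omega>) x)"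
    using AE_lborel_singleton[of 0] by (auto simp: gamma_pdf_def erlang_density_def field_simps)
  have "(\<lambda>x. ennreal (gamma_pdf m \<Omega> x)) \<in> borel_measurable lborel"
    unfolding gamma_pdf_def by measurable
  then show ?thesis
    using assms(1) density_cong[OF _ _ ae] unfolding distributed_def by auto
qed

lemma (in prob_space) prob_gamma_le:
  assumes "distributed M lborel X (\<lambda>x. ennreal (gamma_pdf m \<Omega> x))" "m > 0" "\<Omega> > 0" "0 \<le> a"
  shows "prob {x\<in>space M. X x \<le> a} = erlang_CDF (m - 1) (real m / \<Omega>) a"
  using erlang_distributed_le[OF distributed_gamma_pdf_erlang[OF assms(1,2)]] assms by simp

lemma (in prob_space) AE_gamma_nonneg:
  assumes "distributed M lborel X (\<lambda>x. ennreal (gamma_pdf m \<Omega> x))" "m > 0"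
  shows "AE x in M. 0 \<le> X x"
proof -
  note erlang = distributed_gamma_pdf_erlang[OF assms]
  have "AE x in density lborel (erlang_density (m - 1) (real m / \<Omega>)). 0 \<le> x"
    by (subst AE_density) (auto simp: erlang_density_def)
  then show ?thesis
    unfolding distributed_distr_eq_density[OF erlang, symmetric]
    by (rule AE_distrD[OF distributed_measurable[OF erlang]])
qed

lemma ln_one_plus_eq_nn_integral:
  fixes \<rho> z :: real
  assumes "\<rho> > 0" "0 \<le> z"
  shows "ennreal (ln (1 + \<rho> * z)) = (\<integral>\<^sup>+t. ennreal (if 0 < t \<and> t < z then \<rho> / (1 + \<rho> * t) else 0) \<partial>lborel)"
proof -
  have "DERIV (\<lambda>t. ln (1 + \<rho> * t)) t :> \<rho> / (1 + \<rho> * t)" if "t \<in> {0..z}" for t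
    using that assms by (auto intro!: derivative_eq_intros simp: add_pos_nonneg)
  then have "ennreal (ln (1 + \<rho> * z)) = (\<integral>\<^sup>+t. ennreal (\<rho> / (1 + \<rho> * t)) * indicator {0..z} t \<partial>lborel)"
    using assms by (subst nn_integral_FTC_Icc) (auto simp: add_pos_nonneg)
  also have "\<dots> = (\<integral>\<^sup>+t. ennreal (if 0 < t \<and> t < z then \<rho> / (1 + \<rho> * t) else 0) \<partial>lborel)"
    using AE_lborel_singleton[of 0] AE_lborel_singleton[of z]
    by (intro nn_integral_cong_AE, eventually_elim) (auto simp: indicator_def)
  finally show ?thesis .
qed

text \<open>Write \<open>ln (1 + \<rho> Y)\<close> as the integral of \<open>\<rho> / (1 + \<rho> t)\<close> over \<open>0 < t < Y\<close> and swap the integrals (Tonelli).\<close>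
lemma (in prob_space) expectation_ln_one_plus_tail:
  fixes Y :: "'a \<Rightarrow> real" and \<rho> :: real
  assumes [measurable]: "Y \<in> borel_measurable M" and "AE \<omega> in M. 0 \<le> Y \<omega>" and "\<rho> > 0"
  shows "expectation (\<lambda>\<omega>. ln (1 + \<rho> * Y \<omega>)) =
    enn2real (\<integral>\<^sup>+t. ennreal (indicator {0<..} t * (\<rho> / (1 + \<rho> * t) * prob {\<omega>\<in>space M. t < Y \<omega>})) \<partial>lborel)"
proof -
  interpret pair_sigma_finite lborel M ..
  define Z where "Z \<omega> = max 0 (Y \<omega>)" for \<omega>
  define g where "g t \<omega> = ennreal (if 0 < t \<and> t < Z \<omega> then \<rho> / (1 + \<rho> * t) else 0)" for t \<omega>
  have [measurable]: "Z \<in> borel_measurable M" unfolding Z_def by measurable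
  have "expectation (\<lambda>\<omega>. ln (1 + \<rho> * Y \<omega>)) = expectation (\<lambda>\<omega>. ln (1 + \<rho> * Z \<omega>))"
    using assms(2) by (intro integral_cong_AE) (auto simp: Z_def)
  also have "\<dots> = enn2real (\<integral>\<^sup>+\<omega>. ennreal (ln (1 + \<rho> * Z \<omega>)) \<partial>M)"
    using assms(3) by (intro integral_eq_nn_integral AE_I2) (auto simp: Z_def)
  also have "(\<integral>\<^sup>+\<omega>. ennreal (ln (1 + \<rho> * Z \<omega>)) \<partial>M) = (\<integral>\<^sup>+\<omega>. (\<integral>\<^sup>+t. g t \<omega> \<partial>lborel) \<partial>M)"
    using assms(3) by (intro nn_integral_cong) (simp add: g_def Z_def ln_one_plus_eq_nn_integral)
  also have "\<dots> = (\<integral>\<^sup>+t. (\<integral>\<^sup>+\<omega>. g t \<omega> \<partial>M) \<partial>lborel)"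
    by (rule Fubini') (unfold g_def, measurable)
  also have "\<dots> = (\<integral>\<^sup>+t. ennreal (indicator {0<..} t * (\<rho> / (1 + \<rho> * t) * prob {\<omega>\<in>space M. t < Y \<omega>})) \<partial>lborel)"
  proof (intro nn_integral_cong)
    fix t :: real
    have "g t \<omega> = ennreal (indicator {0<..} t * (\<rho> / (1 + \<rho> * t))) * indicator {\<omega>\<in>space M. t < Y \<omega>} \<omega>"
      if "\<omega> \<in> space M" for \<omega>
      using that by (auto simp: g_def Z_def indicator_def)
    moreover have "0 \<le> indicator {0<..} t * (\<rho> / (1 + \<rho> * t))"
      using assms(3) by (auto simp: indicator_def add_pos_pos intro!: divide_nonneg_pos)
    ultimately show "(\<integral>\<^sup>+\<omega>. g t \<omega> \<partial>M) = ennreal (indicator {0<..} t * (\<rho> / (1 + \<rho> * t) * prob {\<omega>\<in>space M. t < Y \<omega>}))"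
      by (simp add: nn_integral_cong[of M] nn_integral_cmult_indicator emeasure_eq_measure measure_nonneg mult.assoc flip: ennreal_mult)
  qed
  finally show ?thesis .
qed

lemma (in prob_space) expectation_ln_one_plus_of_exp_poly_tail:
  fixes Y :: "'a \<Rightarrow> real" and \<rho> :: real and J :: "'j set"
  assumes "Y \<in> borel_measurable M" "AE \<omega> in M. 0 \<le> Y \<omega>" "\<rho> > 0" "finite J" "\<And>j. j \<in> J \<Longrightarrow> \<alpha> j > 0"
    and tail: "\<And>t. t > 0 \<Longrightarrow> prob {\<omega>\<in>space M. t < Y \<omega>} = (\<Sum>j\<in>J. c j * (t ^ n j * exp (- \<alpha> j * t)))"
  shows "expectation (\<lambda>\<omega>. ln (1 + \<rho> * Y \<omega>)) = (\<Sum>j\<in>J. c j * log_deriv_moment \<rho> (\<alpha> j) (n j))"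
proof -
  define h where "h t = (\<Sum>j\<in>J. c j * (indicator {0<..} t * (\<rho> / (1 + \<rho> * t) * (t ^ n j * exp (- \<alpha> j * t)))))" for t
  have h_eq: "h t = indicator {0<..} t * (\<rho> / (1 + \<rho> * t) * prob {\<omega>\<in>space M. t < Y \<omega>})" for t
    by (cases "t > 0") (simp_all add: h_def tail sum_distrib_left mult_ac)
  have "integrable lborel h"
    unfolding h_def using assms(3,5) by (intro Bochner_Integration.integrable_sum integrable_mult_right integrable_log_deriv_moment) auto
  moreover have "0 \<le> h t" for t
    unfolding h_eq using assms(3) by (auto simp: indicator_def add_pos_pos intro!: divide_nonneg_pos)
  ultimately have "expectation (\<lambda>\<omega>. ln (1 + \<rho> * Y \<omega>)) = integral\<^sup>L lborel h"
    using expectation_ln_one_plus_tail[OF assms(1-3), folded h_eq] Bochner_Integration.integral_nonneg[of lborel h]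
    by (simp add: nn_integral_eq_integral)
  also have "\<dots> = (\<Sum>j\<in>J. c j * log_deriv_moment \<rho> (\<alpha> j) (n j))"
    unfolding h_def log_deriv_moment_def
    by (simp only: Bochner_Integration.integral_sum[OF integrable_mult_right[OF integrable_log_deriv_moment[OF assms(3,5)]]]
        integral_mult_right_zero)
  finally show ?thesis .
qed

lemma (in prob_space)
  assumes "finite I" "I \<noteq> {}" "m > 0" "\<And>i. i \<in> I \<Longrightarrow> distributed M lborel (X i) (\<lambda>x. ennreal (gamma_pdf m \<Omega> x))"
  shows borel_measurable_Max_gamma: "(\<lambda>\<omega>. Max ((\<lambda>i. X i \<omega>) ` I)) \<in> borel_measurable M"
    and AE_Max_gamma_nonneg: "AE \<omega> in M. 0 \<le> Max ((\<lambda>i. X i \<omega>) ` I)"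
proof -
  show "(\<lambda>\<omega>. Max ((\<lambda>i. X i \<omega>) ` I)) \<in> borel_measurable M"
    using assms distributed_measurable by (intro borel_measurable_Max) fastforce+
  have "AE \<omega> in M. \<forall>i\<in>I. 0 \<le> X i \<omega>"
    using assms by (intro AE_finite_allI AE_gamma_nonneg) auto
  then show "AE \<omega> in M. 0 \<le> Max ((\<lambda>i. X i \<omega>) ` I)"
    by eventually_elim (use assms(1,2) in \<open>auto simp: Max_ge_iff\<close>)
qed

lemma (in prob_space) prob_min_selection_gains_gt:
  fixes Gsr Gsd Grd :: "nat \<Rightarrow> 'a \<Rightarrow> real" and a2 t :: real
  assumes indep: "indep_vars (\<lambda>_. borel) (\<lambda>b. case b of SR i \<Rightarrow> Gsr i | SD j \<Rightarrow> Gsd j | RD k \<Rightarrow> Grd k)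
           (SR ` {1..Nr} \<union> SD ` {1..Nd} \<union> RD ` {1..Nd})"
    and "Nr > 0" "Nd > 0" "msr > 0" "mrd > 0" "\<Omega>sr > 0" "\<Omega>rd > 0" "a2 > 0" "t \<ge> 0"
    and dsr: "\<And>i. i \<in> {1..Nr} \<Longrightarrow> distributed M lborel (Gsr i) (\<lambda>x. ennreal (gamma_pdf msr \<Omega>sr x))"
    and drd: "\<And>k. k \<in> {1..Nd} \<Longrightarrow> distributed M lborel (Grd k) (\<lambda>x. ennreal (gamma_pdf mrd \<Omega>rd x))"
  shows "prob {\<omega>\<in>space M. t < min (a2 * Max ((\<lambda>i. Gsr i \<omega>) ` {1..Nr})) (Max ((\<lambda>k. Grd k \<omega>) ` {1..Nd}))}
    = (1 - erlang_CDF (msr - 1) (real msr / (a2 * \<Omega>sr)) t ^ Nr) * (1 - erlang_CDF (mrd - 1) (real mrd / \<Omega>rd) t ^ Nd)"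
proof -
  define c where "c b = (case b of SR i \<Rightarrow> t / a2 | SD j \<Rightarrow> t | RD k \<Rightarrow> t)" for b
  let ?X = "\<lambda>b. case b of SR i \<Rightarrow> Gsr i | SD j \<Rightarrow> Gsd j | RD k \<Rightarrow> Grd k"
  have "{\<omega>\<in>space M. t < min (a2 * Max ((\<lambda>i. Gsr i \<omega>) ` {1..Nr})) (Max ((\<lambda>k. Grd k \<omega>) ` {1..Nd}))}
      = {\<omega>\<in>space M. (\<exists>b\<in>SR ` {1..Nr}. c b < ?X b \<omega>) \<and> (\<exists>b\<in>RD ` {1..Nd}. c b < ?X b \<omega>)}"
  proof -
    have "t < a2 * y \<longleftrightarrow> t / a2 < y" for y
      using assms(8) by (simp add: pos_divide_less_eq mult.commute)
    then show ?thesis using assms(2,3) by (simp add: c_def Max_gr_iff)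
  qed
  also have "prob \<dots> = (1 - (\<Prod>i\<in>{1..Nr}. prob {\<omega>\<in>space M. Gsr i \<omega> \<le> t / a2}))
      * (1 - (\<Prod>k\<in>{1..Nd}. prob {\<omega>\<in>space M. Grd k \<omega> \<le> t}))"
    using assms(2,3) by (subst prob_exceeds_in_both[OF indep]) (auto simp: prod.reindex inj_on_def c_def)
  also have "\<dots> = (1 - erlang_CDF (msr - 1) (real msr / (a2 * \<Omega>sr)) t ^ Nr) * (1 - erlang_CDF (mrd - 1) (real mrd / \<Omega>rd) t ^ Nd)"
  proof -
    have "prob {\<omega>\<in>space M. Gsr i \<omega> \<le> t / a2} = erlang_CDF (msr - 1) (real msr / (a2 * \<Omega>sr)) t"
      if "i \<in> {1..Nr}" for i
      using prob_gamma_le[OF dsr[OF that]] assms by (simp add: erlang_CDF_def)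
    moreover have "prob {\<omega>\<in>space M. Grd k \<omega> \<le> t} = erlang_CDF (mrd - 1) (real mrd / \<Omega>rd) t"
      if "k \<in> {1..Nd}" for k
      using prob_gamma_le[OF drd[OF that]] assms by simp
    ultimately show ?thesis by simp
  qed
  finally show ?thesis .
qed

lemma (in prob_space) expectation_ln_one_plus_min_selection_gains:
  fixes Gsr Gsd Grd :: "nat \<Rightarrow> 'a \<Rightarrow> real" and a2 \<rho> :: real
  assumes indep: "indep_vars (\<lambda>_. borel) (\<lambda>b. case b of SR i \<Rightarrow> Gsr i | SD j \<Rightarrow> Gsd j | RD k \<Rightarrow> Grd k)
           (SR ` {1..Nr} \<union> SD ` {1..Nd} \<union> RD ` {1..Nd})"
    and pos: "Nr > 0" "Nd > 0" "msr > 0" "mrd > 0" "\<Omega>sr > 0" "\<Omega>rd > 0" "a2 > 0" and "\<rho> > 0"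
    and dsr: "\<And>i. i \<in> {1..Nr} \<Longrightarrow> distributed M lborel (Gsr i) (\<lambda>x. ennreal (gamma_pdf msr \<Omega>sr x))"
    and drd: "\<And>k. k \<in> {1..Nd} \<Longrightarrow> distributed M lborel (Grd k) (\<lambda>x. ennreal (gamma_pdf mrd \<Omega>rd x))"
  shows "expectation (\<lambda>\<omega>. ln (1 + \<rho> * min (a2 * Max ((\<lambda>i. Gsr i \<omega>) ` {1..Nr})) (Max ((\<lambda>k. Grd k \<omega>) ` {1..Nd}))))
    = (\<Sum>k\<in>comp_tuples Nr msr. \<Sum>q\<in>comp_tuples Nd mrd.
         cdf_power_coeff (real msr / (a2 * \<Omega>sr)) Nr msr k * cdf_power_coeff (real mrd / \<Omega>rd) Nd mrd q
         * (let n = tuple_degree msr k + tuple_degree mrd q;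
                \<alpha> = real (Nr - k 0) * (real msr / (a2 * \<Omega>sr)) + real (Nd - q 0) * (real mrd / \<Omega>rd)
            in Gamma (real n + 1) / \<rho> ^ n * exp (\<alpha> / \<rho>) * upper_Gamma (- real n) (\<alpha> / \<rho>)))"
proof -
  define gsr where "gsr \<omega> = Max ((\<lambda>i. Gsr i \<omega>) ` {1..Nr})" for \<omega>
  define grd where "grd \<omega> = Max ((\<lambda>k. Grd k \<omega>) ` {1..Nd})" for \<omega>
  define J where "J = comp_tuples Nr msr \<times> comp_tuples Nd mrd"
  define coeff where "coeff = (\<lambda>(k, q).
    cdf_power_coeff (real msr / (a2 * \<Omega>sr)) Nr msr k * cdf_power_coeff (real mrd / \<Omega>rd) Nd mrd q)"
  define deg where "deg = (\<lambda>(k, q). tuple_degree msr k + tuple_degree mrd q)"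
  define \<alpha> where "\<alpha> = (\<lambda>(k :: nat \<Rightarrow> nat, q :: nat \<Rightarrow> nat).
    real (Nr - k 0) * (real msr / (a2 * \<Omega>sr)) + real (Nd - q 0) * (real mrd / \<Omega>rd))"
  have [measurable]: "gsr \<in> borel_measurable M" and "AE \<omega> in M. 0 \<le> gsr \<omega>"
    using dsr pos unfolding gsr_def
    by (auto intro!: borel_measurable_Max_gamma[where m = msr and \<Omega> = \<Omega>sr] AE_Max_gamma_nonneg[where m = msr and \<Omega> = \<Omega>sr])
  moreover have [measurable]: "grd \<in> borel_measurable M" and "AE \<omega> in M. 0 \<le> grd \<omega>"
    using drd pos unfolding grd_def
    by (auto intro!: borel_measurable_Max_gamma[where m = mrd and \<Omega> = \<Omega>rd] AE_Max_gamma_nonneg[where m = mrd and \<Omega> = \<Omega>rd])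
  ultimately have "(\<lambda>\<omega>. min (a2 * gsr \<omega>) (grd \<omega>)) \<in> borel_measurable M"
    and "AE \<omega> in M. 0 \<le> min (a2 * gsr \<omega>) (grd \<omega>)"
    using pos by (measurable, auto elim!: eventually_mono)
  moreover have \<alpha>_pos: "\<alpha> p > 0" if "p \<in> J" for p
    using that pos comp_tuples_zero_less by (auto simp: J_def \<alpha>_def intro!: add_pos_pos)
  moreover have "prob {\<omega>\<in>space M. t < min (a2 * gsr \<omega>) (grd \<omega>)} = (\<Sum>p\<in>J. coeff p * (t ^ deg p * exp (- \<alpha> p * t)))"
    if "t > 0" for t
    using prob_min_selection_gains_gt[OF indep pos less_imp_le[OF that] dsr drd]
      product_of_one_minus_erlang_CDF_powers[OF \<open>msr > 0\<close> \<open>mrd > 0\<close> less_imp_le[OF that]]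
    unfolding gsr_def grd_def J_def coeff_def deg_def \<alpha>_def split_def by (rule trans)
  ultimately have "expectation (\<lambda>\<omega>. ln (1 + \<rho> * min (a2 * gsr \<omega>) (grd \<omega>)))
      = (\<Sum>p\<in>J. coeff p * log_deriv_moment \<rho> (\<alpha> p) (deg p))"
    using \<open>\<rho> > 0\<close> by (intro expectation_ln_one_plus_of_exp_poly_tail) (auto simp: J_def finite_comp_tuples)
  also have "\<dots> = (\<Sum>p\<in>J. coeff p * (Gamma (real (deg p) + 1) / \<rho> ^ deg p
      * exp (\<alpha> p / \<rho>) * upper_Gamma (- real (deg p)) (\<alpha> p / \<rho>)))"
    using \<open>\<rho> > 0\<close> \<alpha>_pos by (intro sum.cong refl) (simp add: log_deriv_moment_upper_Gamma)
  finally show ?thesis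
    by (simp add: gsr_def grd_def J_def coeff_def deg_def \<alpha>_def sum.cartesian_product Let_def case_prod_beta)
qed

theorem mainTheorem2:
  fixes M :: "'a measure"
    and Nr Nd msr msd mrd :: nat
    and \<Omega>sr \<Omega>sd \<Omega>rd \<rho> a1 a2 :: real
    and Gsr Gsd Grd :: "nat \<Rightarrow> 'a \<Rightarrow> real"
  assumes "prob_space M"
    and "Nr > 0" "Nd > 0" "msr > 0" "msd > 0" "mrd > 0"
    and "\<Omega>sr > 0" "\<Omega>sd > 0" "\<Omega>rd > 0" "\<rho> > 0"
    and "0 < a1" "a1 < 1" "0 < a2" "a2 < 1" "a1 + a2 = 1" "a1 > a2"
    and "prob_space.indep_vars M (\<lambda>_. borel)
           (\<lambda>b. case b of SR i \<Rightarrow> Gsr i | SD j \<Rightarrow> Gsd j | RD k \<Rightarrow> Grd k)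
           (SR ` {1..Nr} \<union> SD ` {1..Nd} \<union> RD ` {1..Nd})"
    and "\<And>i. i \<in> {1..Nr} \<Longrightarrow> distributed M lborel (Gsr i) (\<lambda>x. ennreal (gamma_pdf msr \<Omega>sr x))"
    and "\<And>j. j \<in> {1..Nd} \<Longrightarrow> distributed M lborel (Gsd j) (\<lambda>x. ennreal (gamma_pdf msd \<Omega>sd x))"
    and "\<And>k. k \<in> {1..Nd} \<Longrightarrow> distributed M lborel (Grd k) (\<lambda>x. ennreal (gamma_pdf mrd \<Omega>rd x))"
  shows
    "(let gsr = (\<lambda>\<omega>. Max ((\<lambda>i. Gsr i \<omega>) ` {1..Nr}));
          grd = (\<lambda>\<omega>. Max ((\<lambda>k. Grd k \<omega>) ` {1..Nd}));
          Y = (\<lambda>\<omega>. min (a2 * gsr \<omega>) (grd \<omega>))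
      in (1/2) * prob_space.expectation M (\<lambda>\<omega>. log 2 (1 + \<rho> * Y \<omega>)))
     = 1 / (2 * ln 2) *
       (\<Sum>k\<in>comp_tuples Nr msr. \<Sum>q\<in>comp_tuples Nd mrd.
          (let \<tau> = (\<Sum>\<mu><msr. \<mu> * k (\<mu> + 1));
               \<upsilon> = (\<Sum>\<epsilon><mrd. \<epsilon> * q (\<epsilon> + 1));
               \<alpha> = real (Nr - k 0) * real msr / (a2 * \<Omega>sr) + real (Nd - q 0) * real mrd / \<Omega>rd
           in multinom Nr msr k * multinom Nd mrd q * (-1) ^ (Nr + Nd - k 0 - q 0)
              * (\<Prod>\<mu><msr. (1 / fact \<mu>) ^ k (\<mu> + 1)) * (real msr / (a2 * \<Omega>sr)) ^ \<tau>
              * (\<Prod>\<epsilon><mrd. (1 / fact \<epsilon>) ^ q (\<epsilon> + 1)) * (real mrd / \<Omega>rd) ^ \<upsilon>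
              * Gamma (real (\<tau> + \<upsilon>) + 1) / \<rho> ^ (\<tau> + \<upsilon>)
              * exp (\<alpha> / \<rho>) * upper_Gamma (- real (\<tau> + \<upsilon>)) (\<alpha> / \<rho>)))"
proof -
  interpret prob_space M by fact
  \<comment> \<open>The direct link (\<open>Gsd\<close>, \<open>msd\<close>, \<open>\<Omega>sd\<close>) and \<open>a1\<close> do not enter this rate.\<close>
  show ?thesis
    using expectation_ln_one_plus_min_selection_gains[OF assms(17) \<open>Nr > 0\<close> \<open>Nd > 0\<close> \<open>msr > 0\<close>
        \<open>mrd > 0\<close> \<open>\<Omega>sr > 0\<close> \<open>\<Omega>rd > 0\<close> \<open>0 < a2\<close> \<open>\<rho> > 0\<close> assms(18,20)]
    by (simp add: Let_def log_def integral_divide_zero cdf_power_coeff_mult tuple_degree_def mult_ac add_ac cong: sum.cong)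
qed

end
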